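(* Let $Z\subset\mathbb R^n$ be convex, for some $n\in\mathbb N$, and let $y\in Z$. The weight function $t_y:Z\to[0,1]$ is continuous (with respect to the Euclidean topology restricted to $Z$) if and only if $y\in Z\setminus\partial Z$.
   Context: For $x,y\in Z$ write $x\leq_C y$ if $y=tx+(1-t)z$ for some $z\in Z$ and $0<t\leq 1$; the boundary $\partial Z$ is the set of $y\in Z$ such that some $x\in Z$ has $x\not\leq_C y$. The weight function is $t_y(x)=\sup\{0\leq t<1 : \frac{y-tx}{1-t}\in Z\}$. *)

theory Defs
  imports "HOL-Analysis.Analysis"
begin

definition leC :: "'a::real_vector set \<Rightarrow> 'a \<Rightarrow> 'a \<Rightarrow> bool" where
  "leC Z x y \<longleftrightarrow> (\<exists>z\<in>Z. \<exists>t::real. 0 < t \<and> t \<le> 1 \<and> y = t *\<^sub>R x + (1 - t) *\<^sub>R z)"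

definition cboundary :: "'a::real_vector set \<Rightarrow> 'a set" where
  "cboundary Z = {y \<in> Z. \<exists>x\<in>Z. \<not> leC Z x y}"

definition weight :: "'a::real_vector set \<Rightarrow> 'a \<Rightarrow> 'a \<Rightarrow> real" where
  "weight Z y x = Sup {t::real. 0 \<le> t \<and> t < 1 \<and> (1 / (1 - t)) *\<^sub>R (y - t *\<^sub>R x) \<in> Z}"

end

theory Submission
  imports Defs
begin

text \<open>
  If y is a relative interior point, Z contains every small translate
  y + k(a - b) with a, b \<in> Z, and convexity then turns an admissible level t
  of a into the admissible level s < t of b whenever |a - b| is small compared
  with t - s; hence t_y is even uniformly continuous.  If y is a boundary
  point, witnessed by some x with x \<le>_C y failing, then t_y(y) = 1 while every
  point of the segment from y to x other than y admits only the level 0, so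
  t_y jumps at y.
\<close>

definition weight_set :: "'a::real_vector set \<Rightarrow> 'a \<Rightarrow> 'a \<Rightarrow> real set" where
  "weight_set Z y x = {t. 0 \<le> t \<and> t < 1 \<and> (1 / (1 - t)) *\<^sub>R (y - t *\<^sub>R x) \<in> Z}"

lemma weight_eq_Sup_weight_set: "weight Z y x = Sup (weight_set Z y x)"
  by (simp add: weight_def weight_set_def)

lemma zero_mem_weight_set: "y \<in> Z \<Longrightarrow> 0 \<in> weight_set Z y x"
  by (simp add: weight_set_def)

lemma bdd_above_weight_set: "bdd_above (weight_set Z y x)"
  by (rule bdd_aboveI[of _ 1]) (simp add: weight_set_def)

lemma weight_set_le_weight: "t \<in> weight_set Z y x \<Longrightarrow> t \<le> weight Z y x"
  unfolding weight_eq_Sup_weight_set by (rule cSup_upper[OF _ bdd_above_weight_set])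

lemma weight_nonneg: "y \<in> Z \<Longrightarrow> 0 \<le> weight Z y x"
  by (rule weight_set_le_weight[OF zero_mem_weight_set])

lemma less_weightE:
  assumes "y \<in> Z" "c < weight Z y x"
  obtains t where "t \<in> weight_set Z y x" "c < t"
proof -
  have "weight_set Z y x \<noteq> {}"
    using zero_mem_weight_set[OF assms(1)] by blast
  with assms(2) bdd_above_weight_set show ?thesis
    unfolding weight_eq_Sup_weight_set by (meson less_cSupE that)
qed

lemma weight_self: "y \<in> Z \<Longrightarrow> weight Z y y = 1"
proof -
  assume "y \<in> Z"
  have "(1 / (1 - t)) *\<^sub>R (y - t *\<^sub>R y) = y" if "t < 1" for t :: real
  proof -
    have "y - t *\<^sub>R y = (1 - t) *\<^sub>R y"
      by (simp add: algebra_simps)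
    with that show ?thesis
      by simp
  qed
  with \<open>y \<in> Z\<close> have "weight_set Z y y = {0..<1}"
    by (auto simp: weight_set_def)
  then show ?thesis
    by (simp add: weight_eq_Sup_weight_set)
qed

lemma weight_point_as_convex_combination:
  fixes y a b :: "'a::real_vector"
  assumes "0 \<le> s" "s < t" "t < 1"
  defines "\<alpha> \<equiv> s * (1 - t) / (t * (1 - s))" and "k \<equiv> s * t / (t - s)"
  shows "\<alpha> *\<^sub>R ((1 / (1 - t)) *\<^sub>R (y - t *\<^sub>R a)) + (1 - \<alpha>) *\<^sub>R (y + k *\<^sub>R (a - b))
       = (1 / (1 - s)) *\<^sub>R (y - s *\<^sub>R b)"
proof -
  have "t \<noteq> 0" "1 - s \<noteq> 0" "1 - t \<noteq> 0" "t - s \<noteq> 0"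
    using assms by auto
  then have cy: "\<alpha> * (1 / (1 - t)) + (1 - \<alpha>) = 1 / (1 - s)"
    and ca: "(1 - \<alpha>) * k - \<alpha> * (1 / (1 - t)) * t = 0"
    and cb: "(1 - \<alpha>) * k = s / (1 - s)"
    unfolding \<alpha>_def k_def by (simp_all add: divide_simps) (simp_all add: algebra_simps)
  have expand: "\<alpha> *\<^sub>R (u *\<^sub>R (y - t *\<^sub>R a)) + (1 - \<alpha>) *\<^sub>R (y + k *\<^sub>R (a - b))
      = (\<alpha> * u + (1 - \<alpha>)) *\<^sub>R y + ((1 - \<alpha>) * k - \<alpha> * u * t) *\<^sub>R a - ((1 - \<alpha>) * k) *\<^sub>R b"
    for u
    by (simp add: algebra_simps scaleR_diff_left scaleR_add_left)
  show ?thesis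
    unfolding expand cy ca unfolding cb by (simp add: algebra_simps)
qed

lemma weight_set_transfer:
  assumes "convex Z" "0 \<le> s" "s < t" "t \<in> weight_set Z y a"
    and "y + (s * t / (t - s)) *\<^sub>R (a - b) \<in> Z"
  shows "s \<in> weight_set Z y b"
proof -
  have t: "t < 1" "0 < t" and za: "(1 / (1 - t)) *\<^sub>R (y - t *\<^sub>R a) \<in> Z"
    using assms(2-4) by (auto simp: weight_set_def)
  define \<alpha> where "\<alpha> = s * (1 - t) / (t * (1 - s))"
  have "0 \<le> \<alpha>" "\<alpha> \<le> 1"
    using assms(2,3) t mult_left_le_one_le[of s t] by (auto simp: \<alpha>_def field_simps)
  then have "\<alpha> *\<^sub>R ((1 / (1 - t)) *\<^sub>R (y - t *\<^sub>R a))
      + (1 - \<alpha>) *\<^sub>R (y + (s * t / (t - s)) *\<^sub>R (a - b)) \<in> Z"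
    by (intro convexD[OF assms(1) za assms(5)]) auto
  then have "(1 / (1 - s)) *\<^sub>R (y - s *\<^sub>R b) \<in> Z"
    unfolding \<alpha>_def weight_point_as_convex_combination[OF assms(2,3) t(1)] .
  with assms(2,3) t show ?thesis
    by (simp add: weight_set_def)
qed

lemma rel_interior_translates:
  fixes Z :: "'a::real_normed_vector set"
  assumes "y \<in> rel_interior Z"
  obtains E where "E > 0"
    "\<And>a b k. a \<in> Z \<Longrightarrow> b \<in> Z \<Longrightarrow> \<bar>k\<bar> * norm (a - b) < E \<Longrightarrow> y + k *\<^sub>R (a - b) \<in> Z"
proof -
  obtain E where E: "E > 0" "ball y E \<inter> affine hull Z \<subseteq> Z"
    using assms by (auto simp: mem_rel_interior_ball)
  have "y + k *\<^sub>R (a - b) \<in> Z" if "a \<in> Z" "b \<in> Z" "\<bar>k\<bar> * norm (a - b) < E" for a b k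
  proof -
    have "y + k *\<^sub>R (a - b) \<in> affine hull Z"
      using that rel_interior_subset assms
      by (intro mem_affine_3_minus affine_affine_hull hull_inc) auto
    moreover have "y + k *\<^sub>R (a - b) \<in> ball y E"
      using that by (simp add: dist_norm)
    ultimately show ?thesis
      using E by auto
  qed
  with E that show ?thesis
    by blast
qed

lemma weight_lower_bound:
  fixes Z :: "'a::real_normed_vector set"
  assumes "convex Z" "y \<in> Z" "E > 0"
    and translates: "\<And>a b k. a \<in> Z \<Longrightarrow> b \<in> Z \<Longrightarrow> \<bar>k\<bar> * norm (a - b) < E
                        \<Longrightarrow> y + k *\<^sub>R (a - b) \<in> Z"
    and "a \<in> Z" "b \<in> Z" "e > 0" "norm (a - b) < e * E / 4"
  shows "weight Z y a - e < weight Z y b"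
proof (cases "weight Z y a < e / 2")
  case True
  with weight_nonneg[OF \<open>y \<in> Z\<close>, of b] \<open>e > 0\<close> show ?thesis
    by linarith
next
  case False
  define s where "s = weight Z y a - e / 2"
  obtain t where t: "t \<in> weight_set Z y a" "weight Z y a - e / 4 < t"
    using less_weightE[OF \<open>y \<in> Z\<close>, of "weight Z y a - e / 4" a] \<open>e > 0\<close> by auto
  have s: "0 \<le> s" "s < t" "e / 4 < t - s" and "t < 1"
    using False t \<open>e > 0\<close> by (auto simp: s_def weight_set_def)
  have "s * t / (t - s) \<le> 1 / (t - s)"
    using s \<open>t < 1\<close> by (intro divide_right_mono mult_le_one) auto
  also have "\<dots> < 4 / e"
    using s \<open>e > 0\<close> by (simp add: field_simps)
  finally have "\<bar>s * t / (t - s)\<bar> * norm (a - b) < 4 / e * (e * E / 4)"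
    using s assms(8) \<open>e > 0\<close> by (intro mult_strict_mono) auto
  with \<open>e > 0\<close> have "y + (s * t / (t - s)) *\<^sub>R (a - b) \<in> Z"
    by (intro translates assms) auto
  with weight_set_transfer[OF \<open>convex Z\<close> s(1,2) t(1)] have "s \<le> weight Z y b"
    by (intro weight_set_le_weight) auto
  with \<open>e > 0\<close> show ?thesis
    by (simp add: s_def)
qed

lemma uniformly_continuous_on_weight:
  fixes Z :: "'a::real_normed_vector set"
  assumes "convex Z" "y \<in> rel_interior Z"
  shows "uniformly_continuous_on Z (weight Z y)"
proof -
  have "y \<in> Z"
    using assms(2) rel_interior_subset by auto
  obtain E where E: "E > 0"
    "\<And>a b k. a \<in> Z \<Longrightarrow> b \<in> Z \<Longrightarrow> \<bar>k\<bar> * norm (a - b) < E \<Longrightarrow> y + k *\<^sub>R (a - b) \<in> Z"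
    using rel_interior_translates[OF assms(2)] by blast
  have lower: "weight Z y a - e < weight Z y b"
    if "a \<in> Z" "b \<in> Z" "e > 0" "norm (a - b) < e * E / 4" for a b e
    by (rule weight_lower_bound[OF assms(1) \<open>y \<in> Z\<close> E(1) _ that]) (auto intro: E(2))
  show ?thesis
    unfolding uniformly_continuous_on_def
  proof (intro allI impI)
    fix e :: real
    assume "e > 0"
    have "\<bar>weight Z y a - weight Z y b\<bar> < e"
      if "a \<in> Z" "b \<in> Z" "norm (a - b) < e * E / 4" for a b
      using lower[of a b e] lower[of b a e] that \<open>e > 0\<close>
      by (simp add: norm_minus_commute abs_less_iff)
    with \<open>e > 0\<close> \<open>E > 0\<close>
    show "\<exists>d>0. \<forall>a\<in>Z. \<forall>b\<in>Z. dist b a < d \<longrightarrow> dist (weight Z y b) (weight Z y a) < e"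
      by (intro exI[of _ "e * E / 4"]) (auto simp: dist_norm dist_real_def)
  qed
qed

lemma rel_interior_if_not_cboundary:
  fixes Z :: "'a::euclidean_space set"
  assumes "convex Z" "y \<in> Z - cboundary Z"
  shows "y \<in> rel_interior Z"
proof (subst convex_rel_interior_iff[OF assms(1)])
  show "Z \<noteq> {}"
    using assms(2) by auto
  show "\<forall>x\<in>Z. \<exists>e>1. (1 - e) *\<^sub>R x + e *\<^sub>R y \<in> Z"
  proof
    fix x
    assume "x \<in> Z"
    with assms(2) obtain z t where z: "z \<in> Z" and t: "0 < t" "t \<le> 1"
      and y: "y = t *\<^sub>R x + (1 - t) *\<^sub>R z"
      by (auto simp: cboundary_def leC_def)
    show "\<exists>e>1. (1 - e) *\<^sub>R x + e *\<^sub>R y \<in> Z"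
    proof (cases "t = 1")
      case True
      with y \<open>x \<in> Z\<close> show ?thesis
        by (intro exI[of _ 2]) (simp add: algebra_simps scaleR_2)
    next
      case False
      with t have "1 / (1 - t) > 1" "(1 - 1 / (1 - t)) *\<^sub>R x + (1 / (1 - t)) *\<^sub>R y = z"
        by (auto simp: y field_simps algebra_simps scaleR_diff_left[symmetric])
      with z show ?thesis
        by blast
    qed
  qed
qed

text \<open>The point z of level t witnesses x \<le>_C y: y lies strictly between x and z.\<close>
lemma leC_if_positive_weight_on_segment:
  assumes "0 < s" "t \<in> weight_set Z y (y + s *\<^sub>R (x - y))" "0 < t"
  shows "leC Z x y"
proof -
  define z where "z = (1 / (1 - t)) *\<^sub>R (y - t *\<^sub>R (y + s *\<^sub>R (x - y)))"
  define D where "D = 1 - t + t * s"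
  define c where "c = t * s / D"
  have "t < 1" and "z \<in> Z"
    using assms(2) by (auto simp: weight_set_def z_def)
  have "0 < D"
    using \<open>t < 1\<close> assms(1,3) by (simp add: D_def add_pos_pos)
  with \<open>t < 1\<close> assms have c: "0 < c" "c \<le> 1"
    by (auto simp: c_def D_def field_simps)
  have "(1 - t) *\<^sub>R z = y - t *\<^sub>R (y + s *\<^sub>R (x - y))"
    using \<open>t < 1\<close> by (simp add: z_def)
  then have Dy: "D *\<^sub>R y = (t * s) *\<^sub>R x + (1 - t) *\<^sub>R z"
    by (simp add: D_def algebra_simps)
  have "y = (1 / D) *\<^sub>R (D *\<^sub>R y)"
    using \<open>0 < D\<close> by simp
  also have "\<dots> = c *\<^sub>R x + ((1 - t) / D) *\<^sub>R z"
    unfolding Dy by (simp add: c_def scaleR_add_right)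
  also have "(1 - t) / D = 1 - c"
    using \<open>0 < D\<close> by (simp add: c_def D_def field_simps)
  finally show ?thesis
    using c \<open>z \<in> Z\<close> by (auto simp: leC_def)
qed

lemma weight_on_segment_eq_0:
  assumes "y \<in> Z" "\<not> leC Z x y" "0 < s"
  shows "weight Z y (y + s *\<^sub>R (x - y)) = 0"
proof -
  have "t = 0" if "t \<in> weight_set Z y (y + s *\<^sub>R (x - y))" for t
    using that leC_if_positive_weight_on_segment[OF assms(3) that] assms(2)
    by (force simp: weight_set_def)
  with zero_mem_weight_set[OF assms(1)] have "weight_set Z y (y + s *\<^sub>R (x - y)) = {0}"
    by blast
  then show ?thesis
    by (simp add: weight_eq_Sup_weight_set)
qed

lemma not_continuous_on_weight_at_cboundary:
  fixes Z :: "'a::real_normed_vector set"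
  assumes "convex Z" "y \<in> cboundary Z"
  shows "\<not> continuous_on Z (weight Z y)"
proof
  assume cont: "continuous_on Z (weight Z y)"
  obtain x where "y \<in> Z" "x \<in> Z" "\<not> leC Z x y"
    using assms(2) by (auto simp: cboundary_def)
  define p where "p n = y + inverse (real (Suc n)) *\<^sub>R (x - y)" for n
  have "p n \<in> Z" for n
  proof -
    have "p n = (1 - inverse (real (Suc n))) *\<^sub>R y + inverse (real (Suc n)) *\<^sub>R x"
      by (simp add: p_def algebra_simps)
    with \<open>y \<in> Z\<close> \<open>x \<in> Z\<close> show ?thesis
      by (simp add: convexD[OF assms(1)] field_simps)
  qed
  moreover have "p \<longlonglongrightarrow> y"
    using tendsto_add[OF tendsto_const tendsto_scaleR[OF LIMSEQ_inverse_real_of_nat tendsto_const],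
        of y "x - y"]
    by (simp add: p_def[abs_def])
  ultimately have "(\<lambda>n. weight Z y (p n)) \<longlonglongrightarrow> weight Z y y"
    using \<open>y \<in> Z\<close> by (intro continuous_on_tendsto_compose[OF cont]) auto
  moreover have "weight Z y (p n) = 0" for n
    unfolding p_def using \<open>y \<in> Z\<close> \<open>\<not> leC Z x y\<close> by (simp add: weight_on_segment_eq_0)
  ultimately show False
    using LIMSEQ_unique[OF tendsto_const] weight_self[OF \<open>y \<in> Z\<close>] by fastforce
qed

theorem proposition9:
  fixes Z :: "'a::euclidean_space set" and y :: 'a
  assumes "convex Z" and "y \<in> Z"
  shows "continuous_on Z (weight Z y) \<longleftrightarrow> y \<in> Z - cboundary Z"
proof
  assume "y \<in> Z - cboundary Z"
  then have "y \<in> rel_interior Z"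
    by (rule rel_interior_if_not_cboundary[OF assms(1)])
  then show "continuous_on Z (weight Z y)"
    by (intro uniformly_continuous_imp_continuous uniformly_continuous_on_weight assms(1))
next
  assume "continuous_on Z (weight Z y)"
  with not_continuous_on_weight_at_cboundary[OF assms(1)] assms(2) show "y \<in> Z - cboundary Z"
    by blast
qed

end
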